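(* Let $\Omega_\Gamma\subset\mathbb{R}^2$ be a bounded simply connected domain with analytic boundary and $\psi$ real-analytic on $\overline{\Omega_\Gamma}$ with no non-isolated critical points in $\Omega_\Gamma$. Suppose $\Delta\psi=F(\psi)$ in $\Omega_\Gamma$ for a continuous $F$ with $F(0)=1$, and $\psi=0$, $\nabla\psi=0$ on $\partial\Omega_\Gamma$. If $F$ is not real-analytic at $s=0$, then $\psi\ge0$ in $\Omega_\Gamma$. *)

theory Defs
  imports "HOL-Analysis.Analysis"
begin

definition real_analytic_at1 :: "(real \<Rightarrow> real) \<Rightarrow> real \<Rightarrow> bool" where
  "real_analytic_at1 f x0 \<longleftrightarrow>
     (\<exists>r>0. \<exists>a::nat \<Rightarrow> real. \<forall>x. \<bar>x - x0\<bar> < r \<longrightarrow> (\<lambda>n. a n * (x - x0) ^ n) sums f x)"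

definition real_analytic_at2 :: "(real \<times> real \<Rightarrow> real) \<Rightarrow> real \<times> real \<Rightarrow> bool" where
  "real_analytic_at2 f z \<longleftrightarrow>
     (\<exists>r>0. \<exists>a::nat \<times> nat \<Rightarrow> real. \<forall>p\<in>ball z r.
        ((\<lambda>(i,j). a (i,j) * (fst p - fst z) ^ i * (snd p - snd z) ^ j) has_sum f p) UNIV)"

definition analytic_boundary :: "(real \<times> real) set \<Rightarrow> bool" where
  "analytic_boundary \<Omega> \<longleftrightarrow>
     (\<exists>\<gamma>::real \<Rightarrow> real \<times> real.
        (\<forall>t. \<gamma> (t + 1) = \<gamma> t) \<and> inj_on \<gamma> {0..<1} \<and>
        (\<forall>t. real_analytic_at1 (fst \<circ> \<gamma>) t \<and> real_analytic_at1 (snd \<circ> \<gamma>) t) \<and>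
        (\<forall>t. \<gamma> differentiable at t \<and> vector_derivative \<gamma> (at t) \<noteq> 0) \<and>
        \<gamma> ` {0..1} = frontier \<Omega>)"

definition laplacian :: "(real \<times> real \<Rightarrow> real) \<Rightarrow> real \<times> real \<Rightarrow> real" where
  "laplacian f p =
     deriv (\<lambda>x. deriv (\<lambda>x'. f (x', snd p)) x) (fst p)
   + deriv (\<lambda>y. deriv (\<lambda>y'. f (fst p, y')) y) (snd p)"

definition critical_point :: "(real \<times> real \<Rightarrow> real) \<Rightarrow> real \<times> real \<Rightarrow> bool" where
  "critical_point f p \<longleftrightarrow> (f has_derivative (\<lambda>h. 0)) (at p)"

end

theory Submission
  imports Defs "HOL-Complex_Analysis.Complex_Analysis"
begin

text \<open>
  Suppose \<open>\<psi> p\<^sub>0 < 0\<close> for some \<open>p\<^sub>0 \<in> \<Omega>\<close>; we show that \<open>F\<close> is then real-analytic at \<open>0\<close>.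
  If \<open>\<psi>\<close> has a regular zero \<open>q\<close> in \<open>\<Omega>\<close>, restrict \<open>\<psi>\<close> to the line through \<open>q\<close> along a
  coordinate in which \<open>\<psi>\<close> is regular: \<open>\<alpha>(t) = \<psi>(q + t e)\<close> is analytic with \<open>\<alpha>(0) = 0\<close> and
  \<open>\<alpha>'(0) \<noteq> 0\<close>, and \<open>F(\<alpha>(t)) = \<Delta>\<psi>(q + t e)\<close> is analytic, so \<open>F\<close> is analytic near \<open>0\<close>
  by the holomorphic inverse function theorem.
  Otherwise every zero of \<open>\<psi>\<close> in \<open>\<Omega>\<close> is critical and hence isolated, so \<open>\<Omega>\<close> minus the
  zeros is connected and \<open>\<psi> \<le> 0\<close> in \<open>\<Omega>\<close>. Let \<open>y\<close> be a boundary point nearest to \<open>p\<^sub>0\<close>.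
  As \<open>\<psi>\<close> and \<open>\<nabla>\<psi>\<close> vanish at \<open>y\<close>, the Taylor expansion of \<open>\<psi>\<close> at \<open>y\<close> starts with a
  quadratic form \<open>Q\<close>, which vanishes on the tangent to \<open>\<partial>\<Omega>\<close> at \<open>y\<close> and has trace
  \<open>\<Delta>\<psi>(y)/2 = F(0)/2 = 1/2\<close>. So \<open>Q\<close> is positive on the normal \<open>p\<^sub>0 - y\<close>, and \<open>\<psi> > 0\<close> at
  points of the segment from \<open>y\<close> to \<open>p\<^sub>0\<close> close to \<open>y\<close>: a contradiction.
\<close>

section \<open>Absolutely convergent double power series\<close>

definition dps_term :: "(nat \<times> nat \<Rightarrow> real) \<Rightarrow> real \<Rightarrow> real \<Rightarrow> nat \<times> nat \<Rightarrow> real" where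
  "dps_term a s u = (\<lambda>(i,j). a (i,j) * s ^ i * u ^ j)"

definition dps :: "(nat \<times> nat \<Rightarrow> real) \<Rightarrow> real \<Rightarrow> real \<Rightarrow> real" where
  "dps a s u = infsum (dps_term a s u) UNIV"

definition dps_conv :: "(nat \<times> nat \<Rightarrow> real) \<Rightarrow> real \<Rightarrow> bool" where
  "dps_conv a \<rho> \<longleftrightarrow> \<rho> > 0 \<and> (\<lambda>(i,j). \<bar>a (i,j)\<bar> * \<rho> ^ i * \<rho> ^ j) summable_on UNIV"

definition dps_majorant :: "(nat \<times> nat \<Rightarrow> real) \<Rightarrow> real \<Rightarrow> real" where
  "dps_majorant a \<rho> = (\<Sum>\<^sub>\<infinity>(i,j). \<bar>a (i,j)\<bar> * \<rho> ^ i * \<rho> ^ j)"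

definition dps_row :: "(nat \<times> nat \<Rightarrow> real) \<Rightarrow> real \<Rightarrow> nat \<Rightarrow> real" where
  "dps_row a u i = (\<Sum>\<^sub>\<infinity>j. a (i,j) * u ^ j)"

definition dps_transpose :: "(nat \<times> nat \<Rightarrow> real) \<Rightarrow> nat \<times> nat \<Rightarrow> real" where
  "dps_transpose a = (\<lambda>(i,j). a (j,i))"

definition dps_dxx :: "(nat \<times> nat \<Rightarrow> real) \<Rightarrow> nat \<times> nat \<Rightarrow> real" where
  "dps_dxx a = (\<lambda>(i,j). real ((i+2)*(i+1)) * a (i+2, j))"

definition dps_quadratic_part :: "(nat \<times> nat \<Rightarrow> real) \<Rightarrow> real \<Rightarrow> real \<Rightarrow> real" where
  "dps_quadratic_part a s u = a (2,0) * s\<^sup>2 + a (1,1) * s * u + a (0,2) * u\<^sup>2"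

lemma dps_conv_abs_summable:
  assumes "dps_conv a \<rho>" "\<bar>s\<bar> \<le> \<rho>" "\<bar>u\<bar> \<le> \<rho>"
  shows "(\<lambda>x. norm (dps_term a s u x)) summable_on UNIV"
proof (rule Infinite_Sum.abs_summable_on_comparison_test)
  let ?g = "\<lambda>(i,j). \<bar>a (i,j)\<bar> * \<rho> ^ i * \<rho> ^ j"
  have r: "\<rho> > 0" and "?g summable_on UNIV" using assms(1) unfolding dps_conv_def by auto
  moreover have "\<And>x. norm (?g x) = ?g x" using r by (auto simp: abs_mult)
  ultimately show "(\<lambda>x. norm (?g x)) summable_on UNIV" by simp
  fix x :: "nat \<times> nat"
  obtain i j where x: "x = (i,j)" by force
  have "\<bar>s\<bar>^i \<le> \<rho>^i" "\<bar>u\<bar>^j \<le> \<rho>^j" by (rule power_mono; use assms in auto)+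
  then have "\<bar>a (i,j)\<bar> * \<bar>s\<bar>^i * \<bar>u\<bar>^j \<le> \<bar>a (i,j)\<bar> * \<rho> ^ i * \<rho> ^ j"
    using r by (intro mult_mono) auto
  then show "norm (dps_term a s u x) \<le> norm (?g x)" using r
    by (simp add: x dps_term_def abs_mult power_abs)
qed

lemma dps_conv_summable:
  "dps_conv a \<rho> \<Longrightarrow> \<bar>s\<bar> \<le> \<rho> \<Longrightarrow> \<bar>u\<bar> \<le> \<rho> \<Longrightarrow> dps_term a s u summable_on UNIV"
  using dps_conv_abs_summable abs_summable_summable by blast

lemma dps_conv_row_summable:
  assumes "dps_conv a \<rho>" "\<bar>s\<bar> \<le> \<rho>" "\<bar>u\<bar> \<le> \<rho>"
  shows "(\<lambda>j. dps_term a s u (i,j)) summable_on UNIV"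
proof -
  have "(\<lambda>(x,y). dps_term a s u (x,y)) summable_on Sigma UNIV (\<lambda>_. UNIV)"
    using dps_conv_summable[OF assms] by simp
  from summable_on_SigmaD1[OF this, of i] show ?thesis by simp
qed

lemma dps_row_summable:
  assumes A: "dps_conv a \<rho>" and u: "\<bar>u\<bar> \<le> \<rho>"
  shows "(\<lambda>j. a (i,j) * u^j) summable_on UNIV"
proof -
  have r: "\<rho> > 0" using A unfolding dps_conv_def by auto
  have "(\<lambda>j. dps_term a \<rho> u (i,j)) summable_on UNIV"
    by (rule dps_conv_row_summable[OF A]) (use r u in auto)
  then have "(\<lambda>j. inverse (\<rho>^i) * dps_term a \<rho> u (i,j)) summable_on UNIV"
    by (rule summable_on_cmult_right)
  moreover have "(\<lambda>j. inverse (\<rho>^i) * dps_term a \<rho> u (i,j)) = (\<lambda>j. a (i,j) * u^j)"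
    using r by (auto simp: dps_term_def fun_eq_iff)
  ultimately show ?thesis by simp
qed

lemma dps_row_has_sum:
  assumes "dps_conv a \<rho>" "\<bar>s\<bar> \<le> \<rho>" "\<bar>u\<bar> \<le> \<rho>"
  shows "((\<lambda>j. dps_term a s u (i,j)) has_sum (dps_row a u i * s^i)) UNIV"
proof -
  have "((\<lambda>j. a (i,j) * u^j) has_sum dps_row a u i) UNIV"
    unfolding dps_row_def using dps_row_summable[OF assms(1,3)] by (rule has_sum_infsum)
  from has_sum_cmult_right[OF this, of "s^i"] show ?thesis
    by (simp add: dps_term_def mult_ac)
qed

lemma dps_sums_rows:
  assumes "dps_conv a \<rho>" "\<bar>s\<bar> \<le> \<rho>" "\<bar>u\<bar> \<le> \<rho>"
  shows "(\<lambda>i. dps_row a u i * s^i) sums dps a s u"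
proof -
  have "(dps_term a s u has_sum dps a s u) (Sigma UNIV (\<lambda>_. UNIV))"
    using dps_conv_summable[OF assms] unfolding dps_def by (simp add: has_sum_infsum)
  from has_sum_Sigma'[OF this dps_row_has_sum[OF assms]] show ?thesis
    by (rule has_sum_imp_sums)
qed

lemma dps_eq_suminf_rows:
  "dps_conv a \<rho> \<Longrightarrow> \<bar>s\<bar> \<le> \<rho> \<Longrightarrow> \<bar>u\<bar> \<le> \<rho> \<Longrightarrow> dps a s u = (\<Sum>n. dps_row a u n * s^n)"
  using dps_sums_rows sums_unique by blast

lemma dps_transpose_swap: "dps (dps_transpose a) u s = dps a s u"
proof -
  have "dps (dps_transpose a) u s = infsum (\<lambda>x. dps_term a s u (prod.swap x)) UNIV"
    unfolding dps_def by (intro infsum_cong) (auto simp: dps_term_def dps_transpose_def)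
  also have "\<dots> = dps a s u"
    unfolding dps_def by (rule infsum_reindex_bij_betw[OF bij_swap])
  finally show ?thesis .
qed

lemma dps_conv_transpose: "dps_conv (dps_transpose a) \<rho> \<longleftrightarrow> dps_conv a \<rho>"
proof -
  let ?g = "\<lambda>(i,j). \<bar>a (i,j)\<bar> * \<rho> ^ i * \<rho> ^ j"
  have "(\<lambda>(i,j). \<bar>dps_transpose a (i,j)\<bar> * \<rho> ^ i * \<rho> ^ j) = (\<lambda>x. ?g (prod.swap x))"
    by (auto simp: dps_transpose_def fun_eq_iff)
  then show ?thesis
    unfolding dps_conv_def using summable_on_reindex_bij_betw[OF bij_swap, of ?g] by simp
qed

lemma dps_term_le_majorant_term:
  fixes m \<rho> :: real
  assumes "\<bar>s\<bar> \<le> m" "\<bar>u\<bar> \<le> m" "m \<le> \<rho>" "0 < \<rho>" "k \<le> i + j"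
  shows "\<bar>dps_term a s u (i,j)\<bar> \<le> (m/\<rho>)^k * (\<bar>a (i,j)\<bar> * \<rho> ^ i * \<rho> ^ j)"
proof -
  have m0: "0 \<le> m" using assms by linarith
  have "\<bar>s\<bar>^i * \<bar>u\<bar>^j \<le> m^i * m^j" using assms by (intro mult_mono power_mono) auto
  also have "\<dots> = m^k * m^(i+j-k)" using assms(5) by (simp flip: power_add)
  also have "\<dots> \<le> m^k * \<rho>^(i+j-k)" using m0 assms by (intro mult_left_mono power_mono) auto
  also have "\<dots> = (m/\<rho>)^k * \<rho>^(i+j)" using assms(4,5)
    by (simp add: power_divide field_simps flip: power_add)
  finally have "\<bar>a (i,j)\<bar> * (\<bar>s\<bar>^i * \<bar>u\<bar>^j) \<le> \<bar>a (i,j)\<bar> * ((m/\<rho>)^k * \<rho>^(i+j))"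
    by (rule mult_left_mono) auto
  then show ?thesis by (simp add: dps_term_def abs_mult power_abs power_add mult_ac)
qed

lemma dps_remainder_bound:
  assumes A: "dps_conv a \<rho>" and su: "\<bar>s\<bar> \<le> m" "\<bar>u\<bar> \<le> m" and m: "m \<le> \<rho>"
  shows "\<bar>dps a s u - (\<Sum>p\<in>{p. fst p + snd p < k}. dps_term a s u p)\<bar> \<le> (m/\<rho>)^k * dps_majorant a \<rho>"
proof -
  let ?L = "{p::nat \<times> nat. fst p + snd p < k}" and ?T = "{p::nat \<times> nat. k \<le> fst p + snd p}"
  let ?g = "\<lambda>(i,j). \<bar>a (i,j)\<bar> * \<rho> ^ i * \<rho> ^ j"
  have r: "\<rho> > 0" and gs: "?g summable_on UNIV" using A unfolding dps_conv_def by auto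
  have s1: "\<bar>s\<bar> \<le> \<rho>" "\<bar>u\<bar> \<le> \<rho>" using su m by auto
  have finL: "finite ?L" by (rule finite_subset[of _ "{..<k} \<times> {..<k}"]) auto
  have smT: "dps_term a s u summable_on ?T"
    using summable_on_subset_banach[OF dps_conv_summable[OF A s1]] by blast
  have "dps a s u = infsum (dps_term a s u) (?L \<union> ?T)"
    unfolding dps_def by (rule arg_cong[where f="infsum _"]) auto
  also have "\<dots> = infsum (dps_term a s u) ?L + infsum (dps_term a s u) ?T"
    by (rule infsum_Un_disjoint) (use finL smT in auto)
  finally have split: "dps a s u - (\<Sum>p\<in>?L. dps_term a s u p) = infsum (dps_term a s u) ?T"
    using finL by simp
  have abT: "(\<lambda>x. norm (dps_term a s u x)) summable_on ?T"
    using summable_on_subset_banach[OF dps_conv_abs_summable[OF A s1]] by blast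
  have gT: "?g summable_on ?T" by (rule summable_on_subset_banach[OF gs]) auto
  have "\<bar>infsum (dps_term a s u) ?T\<bar> \<le> infsum (\<lambda>x. norm (dps_term a s u x)) ?T"
    using norm_infsum_bound[of "dps_term a s u" ?T] abT by simp
  also have "\<dots> \<le> infsum (\<lambda>x. (m/\<rho>)^k * ?g x) ?T"
    using abT summable_on_cmult_right[OF gT] dps_term_le_majorant_term[OF su m r]
    by (intro infsum_mono) auto
  also have "\<dots> = (m/\<rho>)^k * infsum ?g ?T" by (rule infsum_cmult_right[OF gT])
  also have "\<dots> \<le> (m/\<rho>)^k * dps_majorant a \<rho>"
    unfolding dps_majorant_def using su m r
    by (intro mult_left_mono infsum_mono2 gs gT) auto
  finally show ?thesis using split by simp
qed

lemma dps_truncation_1: "(\<Sum>p\<in>{p. fst p + snd p < 1}. dps_term a s u p) = a (0,0)"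
proof -
  have "{p::nat \<times> nat. fst p + snd p < 1} = {(0,0)}" by auto
  then show ?thesis by (simp add: dps_term_def)
qed

lemma dps_truncation_2:
  "(\<Sum>p\<in>{p. fst p + snd p < 2}. dps_term a s u p) = a (0,0) + a (1,0) * s + a (0,1) * u"
proof -
  have "{p::nat \<times> nat. fst p + snd p < 2} = {(0,0),(1,0),(0,1)}"
    by (auto simp: numeral_2_eq_2 less_Suc_eq add_is_0 add_is_1)
  then show ?thesis by (simp add: dps_term_def)
qed

lemma dps_truncation_3:
  "(\<Sum>p\<in>{p. fst p + snd p < 3}. dps_term a s u p) =
     a (0,0) + a (1,0) * s + a (0,1) * u + dps_quadratic_part a s u"
proof -
  have "(i, j) \<in> {(0,0),(1,0),(0,1),(2,0),(1,1),(0,2)}" if "i + j < 3" for i j :: nat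
    using that by (cases i; cases j) (auto simp: numeral_3_eq_3 numeral_2_eq_2)
  then have "{p::nat \<times> nat. fst p + snd p < 3} = {(0,0),(1,0),(0,1),(2,0),(1,1),(0,2)}" by auto
  then show ?thesis by (simp add: dps_term_def dps_quadratic_part_def)
qed

lemma dps_rows_summable:
  "dps_conv a \<rho> \<Longrightarrow> \<bar>s\<bar> \<le> \<rho> \<Longrightarrow> \<bar>u\<bar> \<le> \<rho> \<Longrightarrow> summable (\<lambda>n. dps_row a u n * s^n)"
  using dps_sums_rows sums_summable by blast

lemma DERIV_shift_on_open:
  fixes f g :: "real \<Rightarrow> real"
  assumes "\<And>y. y \<in> S \<Longrightarrow> f y = g (y - c)" "open S" "x \<in> S"
    "(g has_field_derivative D) (at (x - c))"
  shows "(f has_field_derivative D) (at x)"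
proof -
  have "((\<lambda>y. g (y + (-c))) has_field_derivative D) (at x)"
    using assms(4) DERIV_shift[of g D x "-c"] by simp
  then show ?thesis
    by (rule has_field_derivative_transform_within_open[OF _ assms(2,3)]) (use assms(1) in simp)
qed

lemma dps_has_derivative_fst:
  assumes A: "dps_conv a \<rho>" and u: "\<bar>u\<bar> \<le> \<rho>" and s: "\<bar>s\<bar> < \<rho>"
  shows "((\<lambda>s'. dps a s' u) has_field_derivative (\<Sum>n. diffs (dps_row a u) n * s^n)) (at s)"
proof -
  have "((\<lambda>z. \<Sum>n. dps_row a u n * z^n) has_field_derivative (\<Sum>n. diffs (dps_row a u) n * s^n)) (at s)"
    by (rule termdiffs_strong'[where K=\<rho>]) (use dps_rows_summable[OF A _ u] s in auto)
  then show ?thesis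
    by (rule has_field_derivative_transform_within_open[where S="{-\<rho><..<\<rho>}"])
       (use s dps_eq_suminf_rows[OF A _ u] in auto)
qed

lemma diffs_dps_row_has_derivative:
  assumes A: "dps_conv a \<rho>" and u: "\<bar>u\<bar> \<le> \<rho>" and s: "\<bar>s\<bar> < \<rho>"
  shows "((\<lambda>s'. \<Sum>n. diffs (dps_row a u) n * s'^n)
           has_field_derivative (\<Sum>n. diffs (diffs (dps_row a u)) n * s^n)) (at s)"
proof (rule termdiffs_strong'[where K=\<rho>])
  fix z :: real assume "norm z < \<rho>"
  then show "summable (\<lambda>n. diffs (dps_row a u) n * z^n)"
    by (intro termdiff_converges[where K=\<rho>]) (use dps_rows_summable[OF A _ u] in auto)
qed (use s in auto)

lemma quadratic_le_exp2: "(i+2)*(i+1) \<le> 4 * 2^i"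
proof (induction i)
  case (Suc i)
  show ?case
  proof (cases i)
    case (Suc k)
    have "(Suc i + 2) * (Suc i + 1) \<le> 2 * ((i+2)*(i+1))" using Suc by simp
    also have "\<dots> \<le> 2 * (4 * 2^i)" using Suc.IH by simp
    finally show ?thesis by simp
  qed simp
qed simp

text \<open>The factor \<open>(i+2)(i+1) \<le> 4 \<cdot> 2\<^sup>i\<close> from differentiating twice is absorbed by halving the radius.\<close>
lemma dps_conv_dxx:
  assumes A: "dps_conv a \<rho>"
  shows "dps_conv (dps_dxx a) (\<rho>/2)"
proof -
  let ?G = "\<lambda>(i,j). \<bar>a (i,j)\<bar> * \<rho> ^ i * \<rho> ^ j"
  have r: "\<rho> > 0" and G: "?G summable_on UNIV" using A unfolding dps_conv_def by auto
  define h where "h = (\<lambda>(i::nat,j::nat). (i+2, j))"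
  have "inj h" unfolding h_def by (auto simp: inj_on_def)
  moreover have "?G summable_on range h" by (rule summable_on_subset_banach[OF G]) auto
  ultimately have "(?G \<circ> h) summable_on UNIV" using summable_on_reindex by blast
  then have Gh: "(\<lambda>x. (4/\<rho>^2) * (?G \<circ> h) x) summable_on UNIV" by (rule summable_on_cmult_right)
  have "(\<lambda>x. norm ((\<lambda>(i,j). \<bar>dps_dxx a (i,j)\<bar> * (\<rho>/2) ^ i * (\<rho>/2) ^ j) x)) summable_on UNIV"
  proof (rule Infinite_Sum.abs_summable_on_comparison_test)
    show "(\<lambda>x. norm ((\<lambda>x. (4/\<rho>^2) * (?G \<circ> h) x) x)) summable_on UNIV"
      using Gh r by (simp add: h_def case_prod_unfold abs_mult)
    fix x :: "nat \<times> nat"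
    obtain i j where x: "x = (i,j)" by force
    have "real ((i+2)*(i+1)) \<le> real (4 * 2^i)" using quadratic_le_exp2[of i] by (simp only: of_nat_le_iff)
    then have q: "real ((i+2)*(i+1)) \<le> 4 * 2^i" by (simp only: of_nat_mult of_nat_numeral of_nat_power)
    have "real ((i+2)*(i+1)) * (\<rho>/2)^i \<le> 4 * 2^i * (\<rho>/2)^i"
      by (rule mult_right_mono[OF q]) (use r in simp)
    also have "\<dots> = 4/\<rho>^2 * \<rho>^(i+2)" using r by (simp add: power_divide power_add power2_eq_square)
    finally have q2: "real ((i+2)*(i+1)) * (\<rho>/2)^i \<le> 4/\<rho>^2 * \<rho>^(i+2)" .
    have "(\<rho>/2)^j \<le> \<rho>^j" by (rule power_mono) (use r in auto)
    then have "real ((i+2)*(i+1)) * (\<rho>/2)^i * (\<rho>/2)^j \<le> 4/\<rho>^2 * \<rho>^(i+2) * \<rho>^j"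
      by (rule mult_mono[OF q2]) (use r in auto)
    then have "\<bar>a (i+2,j)\<bar> * (real ((i+2)*(i+1)) * (\<rho>/2)^i * (\<rho>/2)^j)
               \<le> \<bar>a (i+2,j)\<bar> * (4/\<rho>^2 * \<rho>^(i+2) * \<rho>^j)"
      by (rule mult_left_mono) simp
    then show "norm ((\<lambda>(i,j). \<bar>dps_dxx a (i,j)\<bar> * (\<rho>/2) ^ i * (\<rho>/2) ^ j) x)
               \<le> norm ((4/\<rho>^2) * (?G \<circ> h) x)"
      using r by (simp add: x dps_dxx_def h_def abs_mult mult_ac)
  qed
  then show ?thesis unfolding dps_conv_def using r by (simp add: abs_summable_summable)
qed

lemma diffs_diffs_dps_row:
  assumes A: "dps_conv a \<rho>" and u: "\<bar>u\<bar> \<le> \<rho>"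
  shows "diffs (diffs (dps_row a u)) n = dps_row (dps_dxx a) u n"
proof -
  have "dps_row (dps_dxx a) u n = (\<Sum>\<^sub>\<infinity>j. real ((n+2)*(n+1)) * (a (n+2,j) * u^j))"
    unfolding dps_row_def dps_dxx_def by (simp add: mult_ac)
  also have "\<dots> = real ((n+2)*(n+1)) * dps_row a u (n+2)"
    unfolding dps_row_def by (rule infsum_cmult_right) (use dps_row_summable[OF A u] in auto)
  finally show ?thesis by (simp add: diffs_def algebra_simps)
qed

lemma dps_sums_first_axis:
  assumes "dps_conv b \<rho>" "\<bar>t\<bar> \<le> \<rho>"
  shows "(\<lambda>n. b (n,0) * t^n) sums dps b t 0"
proof -
  have "dps_row b 0 n = b (n,0)" for n
  proof -
    have "dps_row b 0 n = infsum (\<lambda>j. b (n,j) * 0^j) {0}"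
      unfolding dps_row_def by (rule infsum_cong_neutral) auto
    then show ?thesis by simp
  qed
  then show ?thesis using dps_sums_rows[OF assms(1,2), of 0] assms unfolding dps_conv_def by simp
qed

lemma dps_first_axis_summable_complex:
  assumes A: "dps_conv b \<rho>" and z: "norm (z::complex) < \<rho>"
  shows "summable (\<lambda>n. of_real (b (n,0)) * z^n)"
proof -
  have "dps_conv (\<lambda>p. \<bar>b p\<bar>) \<rho>" using A unfolding dps_conv_def by (simp add: case_prod_unfold)
  then have "summable (\<lambda>n. \<bar>b (n,0)\<bar> * \<rho>^n)"
    using dps_sums_first_axis[of "\<lambda>p. \<bar>b p\<bar>" \<rho> \<rho>] A unfolding dps_conv_def
    by (auto simp: sums_summable)
  then show ?thesis
  proof (rule summable_comparison_test')
    fix n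
    have "norm z ^ n \<le> \<rho>^n" by (rule power_mono) (use z in auto)
    then show "norm (of_real (b (n,0)) * z^n) \<le> \<bar>b (n,0)\<bar> * \<rho>^n"
      by (simp add: norm_mult norm_power mult_left_mono)
  qed
qed

section \<open>Functions given locally by a double power series\<close>

definition has_dps_expansion ::
    "(real \<times> real \<Rightarrow> real) \<Rightarrow> real \<times> real \<Rightarrow> (nat \<times> nat \<Rightarrow> real) \<Rightarrow> real \<Rightarrow> bool" where
  "has_dps_expansion \<psi> z a \<rho> \<longleftrightarrow> dps_conv a \<rho> \<and>
     (\<forall>s u. \<bar>s\<bar> \<le> \<rho> \<longrightarrow> \<bar>u\<bar> \<le> \<rho> \<longrightarrow> \<psi> (fst z + s, snd z + u) = dps a s u)"

lemma has_dps_expansion_conv: "has_dps_expansion \<psi> z a \<rho> \<Longrightarrow> dps_conv a \<rho>"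
  unfolding has_dps_expansion_def by auto

lemma has_dps_expansion_pos: "has_dps_expansion \<psi> z a \<rho> \<Longrightarrow> \<rho> > 0"
  unfolding has_dps_expansion_def dps_conv_def by auto

lemma has_dps_expansion_eq:
  "has_dps_expansion \<psi> z a \<rho> \<Longrightarrow> \<bar>s\<bar> \<le> \<rho> \<Longrightarrow> \<bar>u\<bar> \<le> \<rho> \<Longrightarrow> \<psi> (fst z + s, snd z + u) = dps a s u"
  unfolding has_dps_expansion_def by auto

lemma has_dps_expansion_swap:
  assumes "has_dps_expansion \<psi> z a \<rho>"
  shows "has_dps_expansion (\<lambda>p. \<psi> (snd p, fst p)) (snd z, fst z) (dps_transpose a) \<rho>"
  using assms unfolding has_dps_expansion_def dps_conv_transpose by (auto simp: dps_transpose_swap)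

lemma real_analytic_at2_has_dps_expansion:
  assumes "real_analytic_at2 \<psi> z"
  obtains a \<rho> where "has_dps_expansion \<psi> z a \<rho>"
proof -
  obtain r a where r: "r > 0" and H: "\<forall>p\<in>ball z r.
        ((\<lambda>(i,j). a (i,j) * (fst p - fst z) ^ i * (snd p - snd z) ^ j) has_sum \<psi> p) UNIV"
    using assms unfolding real_analytic_at2_def by blast
  define \<rho> where "\<rho> = r/3"
  have rp: "\<rho> > 0" using r by (simp add: \<rho>_def)
  have hs: "(dps_term a s u has_sum \<psi> (fst z + s, snd z + u)) UNIV"
    if "\<bar>s\<bar> \<le> \<rho>" "\<bar>u\<bar> \<le> \<rho>" for s u
  proof -
    have "dist z (fst z + s, snd z + u) = sqrt (s\<^sup>2 + u\<^sup>2)"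
      by (cases z) (simp add: dist_Pair_Pair dist_real_def)
    also have "\<dots> \<le> \<bar>s\<bar> + \<bar>u\<bar>" by (rule sqrt_sum_squares_le_sum_abs)
    also have "\<dots> < r" using that r by (simp add: \<rho>_def)
    finally have "(fst z + s, snd z + u) \<in> ball z r" by simp
    from bspec[OF H this] show ?thesis by (simp add: dps_term_def)
  qed
  have "(\<lambda>x. norm (dps_term a \<rho> \<rho> x)) summable_on UNIV"
    using hs[of \<rho> \<rho>] rp summable_on_iff_abs_summable_on_real unfolding summable_on_def by auto
  moreover have "(\<lambda>x. norm (dps_term a \<rho> \<rho> x)) = (\<lambda>(i,j). \<bar>a (i,j)\<bar> * \<rho> ^ i * \<rho> ^ j)"
    using rp by (auto simp: dps_term_def fun_eq_iff abs_mult power_abs)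
  ultimately have "dps_conv a \<rho>" unfolding dps_conv_def using rp by simp
  moreover have "\<psi> (fst z + s, snd z + u) = dps a s u" if "\<bar>s\<bar> \<le> \<rho>" "\<bar>u\<bar> \<le> \<rho>" for s u
    using infsumI[OF hs[OF that]] unfolding dps_def by simp
  ultimately show ?thesis using that unfolding has_dps_expansion_def by blast
qed

lemma has_dps_expansion_center:
  assumes R: "has_dps_expansion \<psi> z a \<rho>"
  shows "\<psi> z = a (0,0)"
proof -
  have r: "\<rho> > 0" using has_dps_expansion_pos[OF R] .
  have "\<psi> (fst z + 0, snd z + 0) = dps a 0 0" using has_dps_expansion_eq[OF R, of 0 0] r by simp
  moreover have "\<bar>dps a 0 0 - (\<Sum>p\<in>{p. fst p + snd p < 1}. dps_term a 0 0 p)\<bar> \<le> (0/\<rho>)^1 * dps_majorant a \<rho>"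
    by (rule dps_remainder_bound[OF has_dps_expansion_conv[OF R]]) (use r in auto)
  ultimately show ?thesis unfolding dps_truncation_1 by simp
qed

lemma has_dps_expansion_remainder:
  assumes R: "has_dps_expansion \<psi> z a \<rho>" and su: "\<bar>s\<bar> \<le> m" "\<bar>u\<bar> \<le> m" and m: "m \<le> \<rho>"
  shows "\<bar>\<psi> (fst z + s, snd z + u) - (\<Sum>p\<in>{p. fst p + snd p < k}. dps_term a s u p)\<bar>
           \<le> (m/\<rho>)^k * dps_majorant a \<rho>"
  using dps_remainder_bound[OF has_dps_expansion_conv[OF R] su m] has_dps_expansion_eq[OF R] su m
  by simp

lemma has_dps_expansion_sums_first_axis:
  assumes R: "has_dps_expansion \<psi> q a \<rho>" and t: "\<bar>t\<bar> \<le> \<rho>"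
  shows "(\<lambda>n. a (n,0) * t^n) sums \<psi> (fst q + t, snd q)"
  using dps_sums_first_axis[OF has_dps_expansion_conv[OF R] t] has_dps_expansion_eq[OF R t, of 0]
    has_dps_expansion_pos[OF R] by simp

lemma has_dps_expansion_has_derivative:
  assumes R: "has_dps_expansion \<psi> z a \<rho>"
  shows "(\<psi> has_derivative (\<lambda>h. a (1,0) * fst h + a (0,1) * snd h)) (at z)"
  unfolding has_derivative_iff_norm
proof
  show "bounded_linear (\<lambda>h. a (1,0) * fst h + a (0,1) * snd h)"
    by (auto intro!: bounded_linear_intros)
  have r: "\<rho> > 0" using has_dps_expansion_pos[OF R] .
  let ?S = "dps_majorant a \<rho>"
  let ?e = "\<lambda>y. norm (\<psi> y - \<psi> z - (a (1,0) * fst (y - z) + a (0,1) * snd (y - z))) / norm (y - z)"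
  show "(?e \<longlongrightarrow> 0) (at z)"
  proof (rule Lim_null_comparison)
    have "((\<lambda>y. norm (y - z) * ?S / \<rho>^2) \<longlongrightarrow> norm (z - z) * ?S / \<rho>^2) (at z)"
      by (intro tendsto_intros) (use r in auto)
    then show "((\<lambda>y. norm (y - z) * ?S / \<rho>^2) \<longlongrightarrow> 0) (at z)" by simp
    show "\<forall>\<^sub>F y in at z. norm (?e y) \<le> norm (y - z) * ?S / \<rho>^2"
      unfolding eventually_at
    proof (intro exI[of _ \<rho>] conjI ballI impI)
      fix y assume y: "y \<noteq> z \<and> dist y z < \<rho>"
      define w where "w = y - z"
      have yw: "y = (fst z + fst w, snd z + snd w)" unfolding w_def by simp
      have nw: "norm w > 0" "norm w \<le> \<rho>" using y by (auto simp: w_def dist_norm)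
      have "\<bar>fst w\<bar> \<le> norm w" "\<bar>snd w\<bar> \<le> norm w"
        using norm_fst_le[of "fst w" "snd w"] norm_snd_le[of "snd w" "fst w"] by auto
      from has_dps_expansion_remainder[OF R this nw(2), of 2]
      have "\<bar>\<psi> y - \<psi> z - (a (1,0) * fst w + a (0,1) * snd w)\<bar> \<le> (norm w/\<rho>)^2 * ?S"
        unfolding dps_truncation_2 has_dps_expansion_center[OF R] yw[symmetric]
        by (simp add: algebra_simps)
      then have "\<bar>\<psi> y - \<psi> z - (a (1,0) * fst w + a (0,1) * snd w)\<bar> / norm w \<le> (norm w/\<rho>)^2 * ?S / norm w"
        by (rule divide_right_mono) (use nw in auto)
      also have "\<dots> = norm w * ?S / \<rho>^2" using nw by (simp add: power2_eq_square field_simps)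
      finally show "norm (?e y) \<le> norm (y - z) * ?S / \<rho>^2" by (simp add: w_def)
    qed (use r in auto)
  qed
qed

lemma real_analytic_at2_isCont: "real_analytic_at2 \<psi> p \<Longrightarrow> isCont \<psi> p"
  by (metis real_analytic_at2_has_dps_expansion has_dps_expansion_has_derivative
      has_derivative_continuous)

lemma has_dps_expansion_critical_point_iff:
  assumes R: "has_dps_expansion \<psi> z a \<rho>"
  shows "critical_point \<psi> z \<longleftrightarrow> a (1,0) = 0 \<and> a (0,1) = 0"
proof
  assume "critical_point \<psi> z"
  then have "(\<lambda>h::real \<times> real. 0::real) = (\<lambda>h. a (1,0) * fst h + a (0,1) * snd h)"
    unfolding critical_point_def using has_derivative_unique has_dps_expansion_has_derivative[OF R]
    by blast
  from fun_cong[OF this, of "(1,0)"] fun_cong[OF this, of "(0,1)"]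
  show "a (1,0) = 0 \<and> a (0,1) = 0" by simp
next
  assume "a (1,0) = 0 \<and> a (0,1) = 0"
  then show "critical_point \<psi> z"
    using has_dps_expansion_has_derivative[OF R] unfolding critical_point_def by simp
qed

lemma has_dps_expansion_second_partial:
  assumes R: "has_dps_expansion \<psi> z a \<rho>" and u: "\<bar>u\<bar> \<le> \<rho>" and s: "\<bar>s\<bar> < \<rho>"
  shows "deriv (\<lambda>x. deriv (\<lambda>x'. \<psi> (x', snd z + u)) x) (fst z + s)
           = (\<Sum>n. diffs (diffs (dps_row a u)) n * s^n)"
proof -
  have A: "dps_conv a \<rho>" using has_dps_expansion_conv[OF R] .
  define S where "S = {fst z - \<rho> <..< fst z + \<rho>}"
  have oS: "open S" unfolding S_def by simp
  have inS: "\<And>x. x \<in> S \<longleftrightarrow> \<bar>x - fst z\<bar> < \<rho>" unfolding S_def by auto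
  have d1: "deriv (\<lambda>x'. \<psi> (x', snd z + u)) x = (\<Sum>n. diffs (dps_row a u) n * (x - fst z)^n)"
    if "x \<in> S" for x
  proof (rule DERIV_imp_deriv, rule DERIV_shift_on_open[where S=S and c="fst z"])
    fix y assume "y \<in> S"
    then show "\<psi> (y, snd z + u) = dps a (y - fst z) u"
      using has_dps_expansion_eq[OF R, of "y - fst z" u] u inS by auto
  qed (use oS that inS dps_has_derivative_fst[OF A u] in auto)
  have "((\<lambda>x. deriv (\<lambda>x'. \<psi> (x', snd z + u)) x)
          has_field_derivative (\<Sum>n. diffs (diffs (dps_row a u)) n * s^n)) (at (fst z + s))"
  proof (rule DERIV_shift_on_open[where S=S and c="fst z"])
    show "fst z + s \<in> S" using inS s by auto
  qed (use oS d1 diffs_dps_row_has_derivative[OF A u s] in auto)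
  then show ?thesis by (rule DERIV_imp_deriv)
qed

lemma has_dps_expansion_laplacian:
  assumes R: "has_dps_expansion \<psi> z a \<rho>" and s: "\<bar>s\<bar> \<le> \<rho>/2" and u: "\<bar>u\<bar> \<le> \<rho>/2"
  shows "laplacian \<psi> (fst z + s, snd z + u)
           = dps (dps_dxx a) s u + dps (dps_dxx (dps_transpose a)) u s"
proof -
  have r: "\<rho> > 0" using has_dps_expansion_pos[OF R] .
  have A: "dps_conv a \<rho>" using has_dps_expansion_conv[OF R] .
  have At: "dps_conv (dps_transpose a) \<rho>" using A dps_conv_transpose by blast
  have "deriv (\<lambda>x. deriv (\<lambda>x'. \<psi> (x', snd z + u)) x) (fst z + s)
          = (\<Sum>n. diffs (diffs (dps_row a u)) n * s^n)"
    by (rule has_dps_expansion_second_partial[OF R]) (use r s u in auto)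
  also have "\<dots> = (\<Sum>n. dps_row (dps_dxx a) u n * s^n)" using diffs_diffs_dps_row[OF A] u r by simp
  also have "\<dots> = dps (dps_dxx a) s u"
    by (rule dps_eq_suminf_rows[symmetric, OF dps_conv_dxx[OF A]]) (use s u in auto)
  finally have xx: "deriv (\<lambda>x. deriv (\<lambda>x'. \<psi> (x', snd z + u)) x) (fst z + s) = dps (dps_dxx a) s u" .
  have "deriv (\<lambda>x. deriv (\<lambda>x'. \<psi> (fst z + s, x')) x) (snd z + u)
          = (\<Sum>n. diffs (diffs (dps_row (dps_transpose a) s)) n * u^n)"
    using has_dps_expansion_second_partial[OF has_dps_expansion_swap[OF R], of s u] r s u by simp
  also have "\<dots> = (\<Sum>n. dps_row (dps_dxx (dps_transpose a)) s n * u^n)"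
    using diffs_diffs_dps_row[OF At] s r by simp
  also have "\<dots> = dps (dps_dxx (dps_transpose a)) u s"
    by (rule dps_eq_suminf_rows[symmetric, OF dps_conv_dxx[OF At]]) (use s u in auto)
  finally have yy: "deriv (\<lambda>x. deriv (\<lambda>x'. \<psi> (fst z + s, x')) x) (snd z + u)
                      = dps (dps_dxx (dps_transpose a)) u s" .
  show ?thesis unfolding laplacian_def using xx yy by simp
qed

lemma has_dps_expansion_laplacian_tendsto:
  assumes R: "has_dps_expansion \<psi> z a \<rho>"
  shows "(laplacian \<psi> \<longlongrightarrow> 2 * (a (2,0) + a (0,2))) (at z)"
proof -
  have r: "\<rho> > 0" using has_dps_expansion_pos[OF R] .
  have A: "dps_conv a \<rho>" using has_dps_expansion_conv[OF R] .
  have At: "dps_conv (dps_transpose a) \<rho>" using A dps_conv_transpose by blast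
  define C where "C = dps_majorant (dps_dxx a) (\<rho>/2) + dps_majorant (dps_dxx (dps_transpose a)) (\<rho>/2)"
  have bound: "norm (laplacian \<psi> p - 2 * (a (2,0) + a (0,2))) \<le> norm (p - z) / (\<rho>/2) * C"
    if "dist p z < \<rho>/2" for p
  proof -
    define w where "w = p - z"
    have p: "p = (fst z + fst w, snd z + snd w)" by (simp add: w_def)
    have "norm w \<le> \<rho>/2" using that by (simp add: w_def dist_norm)
    then have m: "\<bar>fst w\<bar> \<le> norm w" "\<bar>snd w\<bar> \<le> norm w" "norm w \<le> \<rho>/2"
      using norm_fst_le[of "fst w" "snd w"] norm_snd_le[of "snd w" "fst w"] by auto
    have "\<bar>dps (dps_dxx a) (fst w) (snd w) - dps_dxx a (0,0)\<bar>
            \<le> norm w / (\<rho>/2) * dps_majorant (dps_dxx a) (\<rho>/2)"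
      using dps_remainder_bound[OF dps_conv_dxx[OF A] m, of 1] unfolding dps_truncation_1 by simp
    moreover have "\<bar>dps (dps_dxx (dps_transpose a)) (snd w) (fst w) - dps_dxx (dps_transpose a) (0,0)\<bar>
                     \<le> norm w / (\<rho>/2) * dps_majorant (dps_dxx (dps_transpose a)) (\<rho>/2)"
      using dps_remainder_bound[OF dps_conv_dxx[OF At] m(2,1,3), of 1] unfolding dps_truncation_1 by simp
    moreover have "dps_dxx a (0,0) = 2 * a (2,0)" "dps_dxx (dps_transpose a) (0,0) = 2 * a (0,2)"
      by (simp_all add: dps_dxx_def dps_transpose_def numeral_2_eq_2)
    moreover have "laplacian \<psi> p = dps (dps_dxx a) (fst w) (snd w) + dps (dps_dxx (dps_transpose a)) (snd w) (fst w)"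
      unfolding p by (rule has_dps_expansion_laplacian[OF R]) (use m in auto)
    ultimately show ?thesis unfolding C_def w_def by (simp add: abs_le_iff algebra_simps)
  qed
  have "((\<lambda>p. laplacian \<psi> p - 2 * (a (2,0) + a (0,2))) \<longlongrightarrow> 0) (at z)"
  proof (rule Lim_null_comparison)
    show "\<forall>\<^sub>F p in at z. norm (laplacian \<psi> p - 2 * (a (2,0) + a (0,2))) \<le> norm (p - z) / (\<rho>/2) * C"
      unfolding eventually_at using r bound by (intro exI[of _ "\<rho>/2"]) auto
    have "((\<lambda>p. norm (p - z) / (\<rho>/2) * C) \<longlongrightarrow> norm (z - z) / (\<rho>/2) * C) (at z)"
      by (intro tendsto_intros) (use r in auto)
    then show "((\<lambda>p. norm (p - z) / (\<rho>/2) * C) \<longlongrightarrow> 0) (at z)" by simp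
  qed
  then show ?thesis by (rule LIM_zero_cancel)
qed

lemma has_dps_expansion_laplacian_sums_first_axis:
  assumes R: "has_dps_expansion \<psi> q a \<rho>" and t: "\<bar>t\<bar> \<le> \<rho>/2"
  shows "(\<lambda>n. (dps_dxx a (n,0) + dps_transpose (dps_dxx (dps_transpose a)) (n,0)) * t^n)
           sums laplacian \<psi> (fst q + t, snd q)"
proof -
  have A: "dps_conv a \<rho>" using has_dps_expansion_conv[OF R] .
  have A2: "dps_conv (dps_transpose (dps_dxx (dps_transpose a))) (\<rho>/2)"
    using dps_conv_dxx[of "dps_transpose a" \<rho>] A dps_conv_transpose by blast
  have "laplacian \<psi> (fst q + t, snd q + 0)
          = dps (dps_dxx a) t 0 + dps (dps_transpose (dps_dxx (dps_transpose a))) t 0"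
    using has_dps_expansion_laplacian[OF R t, of 0] has_dps_expansion_pos[OF R]
    by (simp add: dps_transpose_swap)
  moreover have "(\<lambda>n. dps_dxx a (n,0) * t^n + dps_transpose (dps_dxx (dps_transpose a)) (n,0) * t^n)
      sums (dps (dps_dxx a) t 0 + dps (dps_transpose (dps_dxx (dps_transpose a))) t 0)"
    by (intro sums_add dps_sums_first_axis[OF dps_conv_dxx[OF A]] dps_sums_first_axis[OF A2] t)
  ultimately show ?thesis by (simp add: distrib_right)
qed

section \<open>Composites with an invertible real power series\<close>

lemma powser_holomorphic_on_ball:
  fixes c :: "nat \<Rightarrow> complex"
  assumes "\<And>z. norm z < R \<Longrightarrow> summable (\<lambda>n. c n * z^n)"
  shows "(\<lambda>z. \<Sum>n. c n * z^n) holomorphic_on ball 0 R"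
proof (unfold holomorphic_on_open[OF open_ball], intro ballI exI)
  fix x :: complex assume "x \<in> ball 0 R"
  then show "((\<lambda>z. \<Sum>n. c n * z^n) has_field_derivative (\<Sum>n. diffs c n * x^n)) (at x)"
    by (intro termdiffs_strong'[where K=R]) (use assms in auto)
qed

lemma cnj_suminf_real_powser:
  fixes \<alpha> :: "nat \<Rightarrow> real"
  assumes "summable (\<lambda>n. of_real (\<alpha> n) * z^n)"
  shows "(\<Sum>n. of_real (\<alpha> n) * cnj z ^ n) = cnj (\<Sum>n. of_real (\<alpha> n) * z^n)"
proof -
  have "(\<lambda>n. cnj (of_real (\<alpha> n) * z^n)) sums cnj (\<Sum>n. of_real (\<alpha> n) * z^n)"
    using summable_sums[OF assms] by (rule sums_cnj[THEN iffD2])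
  then show ?thesis by (simp add: sums_iff)
qed

lemma suminf_real_powser_of_real:
  fixes \<alpha> :: "nat \<Rightarrow> real"
  assumes "summable (\<lambda>n. of_real (\<alpha> n) * (of_real t :: complex)^n)"
  shows "(\<Sum>n. of_real (\<alpha> n) * (of_real t :: complex)^n) = of_real (\<Sum>n. \<alpha> n * t^n)"
proof -
  have e: "(\<lambda>n. of_real (\<alpha> n) * (of_real t :: complex)^n) = (\<lambda>n. of_real (\<alpha> n * t^n))" by simp
  have "summable (\<lambda>n. \<alpha> n * t^n)" using assms unfolding e summable_of_real_iff .
  then show ?thesis unfolding e by (rule suminf_of_real[symmetric])
qed

lemma real_analytic_at1_Re_holomorphic:
  assumes hol: "K holomorphic_on ball 0 \<epsilon>" and "\<epsilon> > 0"
    and f: "\<And>x. \<bar>x\<bar> < \<epsilon> \<Longrightarrow> f x = Re (K (of_real x))"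
  shows "real_analytic_at1 f 0"
  unfolding real_analytic_at1_def
proof (intro exI[of _ \<epsilon>] conjI allI impI exI[of _ "\<lambda>n. Re ((deriv ^^ n) K 0 / fact n)"])
  fix x :: real assume x: "\<bar>x - 0\<bar> < \<epsilon>"
  then have x_ball: "(of_real x :: complex) \<in> ball 0 \<epsilon>" by simp
  have Re_mult: "Re (c * complex_of_real r) = Re c * r" for c r by simp
  have "f x = Re (K (of_real x))" using f x by simp
  with sums_Re[OF holomorphic_power_series[OF hol x_ball]]
  show "(\<lambda>n. Re ((deriv ^^ n) K 0 / fact n) * (x - 0)^n) sums f x"
    by (simp only: diff_zero of_real_power[symmetric] Re_mult)
qed fact

text \<open>
  \<open>F = \<beta> \<circ> \<alpha>\<^sup>-\<^sup>1\<close>, with the inverse taken in the complex domain; it maps reals to reals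
  because \<open>\<alpha>\<close> commutes with conjugation and is injective near \<open>0\<close>.
\<close>
lemma real_analytic_at1_of_powser_compose:
  fixes \<alpha> \<beta> :: "nat \<Rightarrow> real" and F :: "real \<Rightarrow> real"
  assumes "R > 0"
    and sa: "\<And>z::complex. norm z < R \<Longrightarrow> summable (\<lambda>n. of_real (\<alpha> n) * z^n)"
    and sb: "\<And>z::complex. norm z < R \<Longrightarrow> summable (\<lambda>n. of_real (\<beta> n) * z^n)"
    and a0: "\<alpha> 0 = 0" and a1: "\<alpha> 1 \<noteq> 0"
    and eq: "\<And>t. \<bar>t\<bar> < R \<Longrightarrow> F (\<Sum>n. \<alpha> n * t^n) = (\<Sum>n. \<beta> n * t^n)"
  shows "real_analytic_at1 F 0"
proof -
  define G where "G = (\<lambda>z::complex. \<Sum>n. of_real (\<alpha> n) * z^n)"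
  define H where "H = (\<lambda>z::complex. \<Sum>n. of_real (\<beta> n) * z^n)"
  have hG: "G holomorphic_on ball 0 R" unfolding G_def by (rule powser_holomorphic_on_ball[OF sa])
  have hH: "H holomorphic_on ball 0 R" unfolding H_def by (rule powser_holomorphic_on_ball[OF sb])
  have "(G has_field_derivative (\<Sum>n. diffs (\<lambda>n. of_real (\<alpha> n)) n * 0^n)) (at 0)"
    unfolding G_def by (rule termdiffs_strong'[where K=R]) (use sa \<open>R > 0\<close> in auto)
  then have dG: "deriv G 0 \<noteq> 0" using a1 by (simp add: DERIV_imp_deriv powser_zero diffs_def)
  have "(0::complex) \<in> ball 0 R" using \<open>R > 0\<close> by simp
  then have "\<exists>r>0. ball (0::complex) r \<subseteq> ball 0 R \<and> open (G ` ball 0 r) \<and> inj_on G (ball 0 r)"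
    by (rule has_complex_derivative_locally_invertible[OF hG _ open_ball dG]) blast
  then obtain r where r: "r > 0" "ball (0::complex) r \<subseteq> ball 0 R" "open (G ` ball 0 r)" "inj_on G (ball 0 r)"
    by blast
  define B where "B = ball (0::complex) r"
  have BR: "\<And>z. z \<in> B \<Longrightarrow> norm z < R" using r(2) unfolding B_def by auto
  obtain g where g: "g holomorphic_on (G ` B)" "\<And>z. z \<in> B \<Longrightarrow> g (G z) = z"
    using holomorphic_has_inverse[OF holomorphic_on_subset[OF hG r(2)] open_ball r(4)]
    unfolding B_def by metis
  have "G 0 = 0" unfolding G_def using a0 by simp
  then have "0 \<in> G ` B" using r(1) unfolding B_def by force
  then obtain \<epsilon> where \<epsilon>: "\<epsilon> > 0" "ball 0 \<epsilon> \<subseteq> G ` B"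
    using r(3) unfolding B_def by (meson openE)
  have hK: "(H \<circ> g) holomorphic_on ball 0 \<epsilon>"
    by (rule holomorphic_on_subset[OF holomorphic_on_compose_gen[OF g(1) hH] \<epsilon>(2)])
       (use g(2) BR in auto)
  show ?thesis
  proof (rule real_analytic_at1_Re_holomorphic[OF hK \<epsilon>(1)])
    fix x :: real assume x: "\<bar>x\<bar> < \<epsilon>"
    then have "complex_of_real x \<in> ball 0 \<epsilon>" by simp
    then obtain z where z: "z \<in> B" "G z = of_real x" using \<epsilon>(2) by (metis subsetD imageE)
    have "G (cnj z) = cnj (G z)" unfolding G_def
      by (rule cnj_suminf_real_powser[OF sa]) (use z(1) BR in auto)
    also have "\<dots> = G z" using z(2) by simp
    finally have "cnj z = z" using r(4) z(1) unfolding B_def inj_on_def by auto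
    then have zr: "z = of_real (Re z)" by (metis Reals_cnj_iff complex_is_Real_iff of_real_Re)
    have Rez: "norm (of_real (Re z) :: complex) < R" "\<bar>Re z\<bar> < R"
      using BR[OF z(1)] abs_Re_le_cmod[of z] zr by (auto simp del: norm_of_real)
    have "of_real x = G (of_real (Re z))" using z(2) zr by simp
    also have "\<dots> = of_real (\<Sum>n. \<alpha> n * Re z ^ n)"
      unfolding G_def by (rule suminf_real_powser_of_real[OF sa[OF Rez(1)]])
    finally have "F x = (\<Sum>n. \<beta> n * Re z ^ n)" using eq[OF Rez(2)] by simp
    also have "\<dots> = Re (H (of_real (Re z)))"
      unfolding H_def by (simp add: suminf_real_powser_of_real[OF sb[OF Rez(1)]])
    also have "\<dots> = Re ((H \<circ> g) (of_real x))" using g(2)[OF z(1)] z(2) zr by simp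
    finally show "F x = Re ((H \<circ> g) (of_real x))" .
  qed
qed

section \<open>A regular zero forces \<open>F\<close> to be analytic\<close>

lemma laplacian_swap: "laplacian (\<lambda>p. \<psi> (snd p, fst p)) (x, y) = laplacian \<psi> (y, x)"
  unfolding laplacian_def by simp

lemma real_analytic_at1_of_regular_zero_fst:
  assumes R: "has_dps_expansion \<psi> q a \<rho>" and a10: "a (1,0) \<noteq> 0" and q0: "\<psi> q = 0"
    and "open \<Omega>" and "q \<in> \<Omega>" and lap: "\<And>p. p \<in> \<Omega> \<Longrightarrow> laplacian \<psi> p = F (\<psi> p)"
  shows "real_analytic_at1 F 0"
proof -
  have r: "\<rho> > 0" using has_dps_expansion_pos[OF R] .
  have A: "dps_conv a \<rho>" using has_dps_expansion_conv[OF R] .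
  have A1: "dps_conv (dps_dxx a) (\<rho>/2)" using dps_conv_dxx[OF A] .
  have A2: "dps_conv (dps_transpose (dps_dxx (dps_transpose a))) (\<rho>/2)"
    using dps_conv_dxx[of "dps_transpose a" \<rho>] A dps_conv_transpose by blast
  define \<beta> where "\<beta> = (\<lambda>n. dps_dxx a (n,0) + dps_transpose (dps_dxx (dps_transpose a)) (n,0))"
  obtain e where e: "e > 0" "ball q e \<subseteq> \<Omega>" using \<open>open \<Omega>\<close> \<open>q \<in> \<Omega>\<close> openE by blast
  show ?thesis
  proof (rule real_analytic_at1_of_powser_compose[of "min e (\<rho>/2)" "\<lambda>n. a (n,0)" \<beta>])
    fix z :: complex assume "norm z < min e (\<rho>/2)"
    then have z: "norm z < \<rho>/2" by simp
    then show "summable (\<lambda>n. of_real (a (n,0)) * z^n)"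
      using dps_first_axis_summable_complex[OF A] r by simp
    have "summable (\<lambda>n. of_real (dps_dxx a (n,0)) * z^n
                        + of_real (dps_transpose (dps_dxx (dps_transpose a)) (n,0)) * z^n)"
      by (intro summable_add dps_first_axis_summable_complex[OF A1] dps_first_axis_summable_complex[OF A2] z)
    then show "summable (\<lambda>n. of_real (\<beta> n) * z^n)" unfolding \<beta>_def by (simp add: distrib_right)
  next
    fix t :: real assume "\<bar>t\<bar> < min e (\<rho>/2)"
    then have t: "\<bar>t\<bar> \<le> \<rho>/2" "\<bar>t\<bar> < e" by auto
    have "(fst q + t, snd q) \<in> \<Omega>"
      using e t by (cases q) (auto simp: dist_Pair_Pair dist_real_def)
    moreover have "(\<Sum>n. a (n,0) * t^n) = \<psi> (fst q + t, snd q)"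
      using has_dps_expansion_sums_first_axis[OF R, of t] t r by (simp add: sums_iff)
    moreover have "(\<Sum>n. \<beta> n * t^n) = laplacian \<psi> (fst q + t, snd q)"
      using has_dps_expansion_laplacian_sums_first_axis[OF R t(1)] unfolding \<beta>_def by (simp add: sums_iff)
    ultimately show "F (\<Sum>n. a (n,0) * t^n) = (\<Sum>n. \<beta> n * t^n)" using lap by simp
  qed (use r e a10 q0 has_dps_expansion_center[OF R] in auto)
qed

lemma real_analytic_at1_of_regular_zero:
  assumes an: "real_analytic_at2 \<psi> q" and q0: "\<psi> q = 0" and nc: "\<not> critical_point \<psi> q"
    and "open \<Omega>" and qO: "q \<in> \<Omega>" and lap: "\<And>p. p \<in> \<Omega> \<Longrightarrow> laplacian \<psi> p = F (\<psi> p)"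
  shows "real_analytic_at1 F 0"
proof -
  obtain a \<rho> where R: "has_dps_expansion \<psi> q a \<rho>"
    using real_analytic_at2_has_dps_expansion[OF an] by blast
  have "a (1,0) \<noteq> 0 \<or> a (0,1) \<noteq> 0" using has_dps_expansion_critical_point_iff[OF R] nc by auto
  then show ?thesis
  proof
    assume "a (1,0) \<noteq> 0"
    then show ?thesis by (rule real_analytic_at1_of_regular_zero_fst[OF R _ q0 \<open>open \<Omega>\<close> qO lap])
  next
    assume "a (0,1) \<noteq> 0"
    then have "dps_transpose a (1,0) \<noteq> 0" by (simp add: dps_transpose_def)
    moreover have "open (prod.swap -` \<Omega>)"
      using continuous_open_preimage[OF continuous_on_swap open_UNIV \<open>open \<Omega>\<close>] by simp
    moreover have "laplacian (\<lambda>p. \<psi> (snd p, fst p)) p = F (\<psi> (snd p, fst p))" if "p \<in> prod.swap -` \<Omega>" for p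
      using that lap by (cases p) (simp add: laplacian_swap)
    ultimately show ?thesis
      using real_analytic_at1_of_regular_zero_fst[OF has_dps_expansion_swap[OF R], of "prod.swap -` \<Omega>"]
        q0 qO by (cases q) auto
  qed
qed

section \<open>The second-order Taylor polynomial at a boundary point\<close>

lemma dps_quadratic_part_scale:
  "dps_quadratic_part a (c * s) (c * u) = c\<^sup>2 * dps_quadratic_part a s u"
  by (simp add: dps_quadratic_part_def algebra_simps power2_eq_square)

lemma has_dps_expansion_quadratic_remainder:
  assumes R: "has_dps_expansion \<psi> y a \<rho>" and c: "a (0,0) = 0" "a (1,0) = 0" "a (0,1) = 0"
    and su: "\<bar>s\<bar> + \<bar>u\<bar> \<le> \<rho>"
  shows "\<bar>\<psi> (fst y + s, snd y + u) - dps_quadratic_part a s u\<bar>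
           \<le> ((\<bar>s\<bar> + \<bar>u\<bar>)/\<rho>)^3 * dps_majorant a \<rho>"
  using has_dps_expansion_remainder[OF R, where s=s and u=u and m="\<bar>s\<bar> + \<bar>u\<bar>" and k=3] su c
  by (simp add: dps_truncation_3)

lemma has_dps_expansion_eventually_pos:
  assumes R: "has_dps_expansion \<psi> y a \<rho>" and c: "a (0,0) = 0" "a (1,0) = 0" "a (0,1) = 0"
    and q: "dps_quadratic_part a v1 v2 > 0"
  shows "\<forall>\<^sub>F t in at_right 0. \<psi> (fst y + t * v1, snd y + t * v2) > 0"
proof -
  have r: "\<rho> > 0" using has_dps_expansion_pos[OF R] .
  define V where "V = \<bar>v1\<bar> + \<bar>v2\<bar>"
  define K where "K = V^3 * dps_majorant a \<rho> / \<rho>^3"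
  have lim: "((\<lambda>t. t * C) \<longlongrightarrow> 0) (at_right 0)" for C :: real
    by (rule tendsto_eq_intros) auto
  have "\<forall>\<^sub>F t in at_right 0. 0 < t \<and> t * V < \<rho> \<and> t * K < dps_quadratic_part a v1 v2"
    by (intro eventually_conj eventually_at_right_less order_tendstoD(2)[OF lim r]
        order_tendstoD(2)[OF lim q])
  then show ?thesis
  proof eventually_elim
    case (elim t)
    have "\<bar>t * v1\<bar> + \<bar>t * v2\<bar> = t * V" using elim by (simp add: V_def abs_mult distrib_left)
    then have "\<bar>\<psi> (fst y + t * v1, snd y + t * v2) - t\<^sup>2 * dps_quadratic_part a v1 v2\<bar>
                 \<le> (t * V / \<rho>)^3 * dps_majorant a \<rho>"
      using has_dps_expansion_quadratic_remainder[OF R c, of "t * v1" "t * v2"] elim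
      by (simp add: dps_quadratic_part_scale)
    also have "\<dots> = t\<^sup>2 * (t * K)"
      by (simp add: K_def power_divide power_mult_distrib power2_eq_square power3_eq_cube)
    also have "\<dots> < t\<^sup>2 * dps_quadratic_part a v1 v2"
      using elim by (intro mult_strict_left_mono) auto
    finally show ?case by linarith
  qed
qed

lemma has_dps_expansion_quadratic_part_bound_on_zero:
  assumes R: "has_dps_expansion \<psi> y a \<rho>" and c: "a (0,0) = 0" "a (1,0) = 0" "a (0,1) = 0"
    and zero: "\<psi> (fst y + h * d1, snd y + h * d2) = 0" and h: "h \<noteq> 0"
    and small: "\<bar>h\<bar> * (\<bar>d1\<bar> + \<bar>d2\<bar>) \<le> \<rho>"
  shows "\<bar>dps_quadratic_part a d1 d2\<bar> \<le> \<bar>h\<bar> * (\<bar>d1\<bar> + \<bar>d2\<bar>)^3 * dps_majorant a \<rho> / \<rho>^3"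
proof -
  have "h\<^sup>2 * \<bar>dps_quadratic_part a d1 d2\<bar> \<le> (\<bar>h\<bar> * (\<bar>d1\<bar> + \<bar>d2\<bar>) / \<rho>)^3 * dps_majorant a \<rho>"
    using has_dps_expansion_quadratic_remainder[OF R c, of "h * d1" "h * d2"] zero small
    by (simp add: dps_quadratic_part_scale abs_mult distrib_left[symmetric])
  also have "\<dots> = h\<^sup>2 * (\<bar>h\<bar> * (\<bar>d1\<bar> + \<bar>d2\<bar>)^3 * dps_majorant a \<rho> / \<rho>^3)"
    by (simp add: power_divide power_mult_distrib power2_eq_square power3_eq_cube)
  finally have "h\<^sup>2 * \<bar>dps_quadratic_part a d1 d2\<bar>
                  \<le> h\<^sup>2 * (\<bar>h\<bar> * (\<bar>d1\<bar> + \<bar>d2\<bar>)^3 * dps_majorant a \<rho> / \<rho>^3)" .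
  moreover have "h\<^sup>2 > 0" using h by simp
  ultimately show ?thesis by (simp only: mult_le_cancel_left_pos)
qed

lemma has_vector_derivative_fst_snd:
  fixes \<gamma> :: "real \<Rightarrow> real \<times> real"
  assumes "(\<gamma> has_vector_derivative \<tau>) (at t)"
  shows "((\<lambda>t. fst (\<gamma> t)) has_real_derivative fst \<tau>) (at t)"
    and "((\<lambda>t. snd (\<gamma> t)) has_real_derivative snd \<tau>) (at t)"
  using bounded_linear.has_vector_derivative[OF bounded_linear_fst assms]
    bounded_linear.has_vector_derivative[OF bounded_linear_snd assms]
  by (simp_all add: has_real_derivative_iff_has_vector_derivative)

lemma has_dps_expansion_quadratic_part_tangent:
  assumes R: "has_dps_expansion \<psi> y a \<rho>" and c: "a (0,0) = 0" "a (1,0) = 0" "a (0,1) = 0"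
    and \<gamma>: "(\<gamma> has_vector_derivative \<tau>) (at t0)" and y: "\<gamma> t0 = y"
    and zero: "\<And>t. \<psi> (\<gamma> t) = 0"
  shows "dps_quadratic_part a (fst \<tau>) (snd \<tau>) = 0"
proof -
  have r: "\<rho> > 0" using has_dps_expansion_pos[OF R] .
  define S where "S = dps_majorant a \<rho>"
  define D1 where "D1 = (\<lambda>t. (fst (\<gamma> t) - fst y) / (t - t0))"
  define D2 where "D2 = (\<lambda>t. (snd (\<gamma> t) - snd y) / (t - t0))"
  note g = has_vector_derivative_fst_snd[OF \<gamma>]
  have D1: "(D1 \<longlongrightarrow> fst \<tau>) (at t0)" and D2: "(D2 \<longlongrightarrow> snd \<tau>) (at t0)"
    using g y unfolding D1_def D2_def has_field_derivative_iff by auto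
  have "((\<lambda>t. \<bar>t - t0\<bar> * (\<bar>D1 t\<bar> + \<bar>D2 t\<bar>)) \<longlongrightarrow> \<bar>t0 - t0\<bar> * (\<bar>fst \<tau>\<bar> + \<bar>snd \<tau>\<bar>)) (at t0)"
    by (intro tendsto_intros D1 D2)
  then have "\<forall>\<^sub>F t in at t0. \<bar>t - t0\<bar> * (\<bar>D1 t\<bar> + \<bar>D2 t\<bar>) < \<rho>"
    using r by (intro order_tendstoD) auto
  then have "\<forall>\<^sub>F t in at t0.
      \<bar>dps_quadratic_part a (D1 t) (D2 t)\<bar> \<le> \<bar>t - t0\<bar> * (\<bar>D1 t\<bar> + \<bar>D2 t\<bar>)^3 * S / \<rho>^3"
    using eventually_at_in_open[of UNIV t0, OF open_UNIV UNIV_I]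
  proof eventually_elim
    case (elim t)
    then have "t \<noteq> t0" by auto
    moreover have "\<psi> (fst y + (t - t0) * D1 t, snd y + (t - t0) * D2 t) = 0"
      using zero[of t] \<open>t \<noteq> t0\<close> by (simp add: D1_def D2_def)
    ultimately show ?case
      using has_dps_expansion_quadratic_part_bound_on_zero[OF R c] elim unfolding S_def by simp
  qed
  moreover have "((\<lambda>t. \<bar>t - t0\<bar> * (\<bar>D1 t\<bar> + \<bar>D2 t\<bar>)^3 * S / \<rho>^3) \<longlongrightarrow> 0) (at t0)"
    using D1 D2 r by (auto intro!: tendsto_eq_intros)
  moreover have "((\<lambda>t. \<bar>dps_quadratic_part a (D1 t) (D2 t)\<bar>)
                   \<longlongrightarrow> \<bar>dps_quadratic_part a (fst \<tau>) (snd \<tau>)\<bar>) (at t0)"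
    unfolding dps_quadratic_part_def by (intro tendsto_intros D1 D2)
  ultimately have "\<bar>dps_quadratic_part a (fst \<tau>) (snd \<tau>)\<bar> \<le> 0"
    by (intro tendsto_le[of "at t0"]) auto
  then show ?thesis by simp
qed

text \<open>
  Write \<open>v = w t + c t\<^sup>\<bottom>\<close> with \<open>t\<^sup>\<bottom> = (t\<^sub>2, -t\<^sub>1)\<close>. Orthogonality gives \<open>w = 0\<close>, and
  \<open>Q(t\<^sup>\<bottom>) = (A + C) |t|\<^sup>2 - Q(t)\<close> for any binary quadratic form \<open>Q\<close>.
\<close>
lemma quadratic_form_pos_on_orthogonal:
  fixes A B C v1 v2 t1 t2 :: real
  assumes orth: "v1 * t1 + v2 * t2 = 0" and tr: "A + C > 0"
    and qt: "A * t1\<^sup>2 + B * t1 * t2 + C * t2\<^sup>2 = 0"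
    and tn: "t1 \<noteq> 0 \<or> t2 \<noteq> 0" and vn: "v1 \<noteq> 0 \<or> v2 \<noteq> 0"
  shows "A * v1\<^sup>2 + B * v1 * v2 + C * v2\<^sup>2 > 0"
proof -
  define Q where "Q = (\<lambda>s u. A * s\<^sup>2 + B * s * u + C * u\<^sup>2)"
  define c where "c = v1 * t2 - v2 * t1"
  define T where "T = t1\<^sup>2 + t2\<^sup>2"
  have T: "T > 0" using tn unfolding T_def by (auto simp: add_pos_nonneg add_nonneg_pos)
  have "T\<^sup>2 * Q v1 v2 = Q (c * t2) (- (c * t1))"
    using orth unfolding Q_def c_def T_def by algebra
  also have "\<dots> = c\<^sup>2 * ((A + C) * T - Q t1 t2)" unfolding Q_def T_def by algebra
  also have "\<dots> = c\<^sup>2 * (A + C) * T" using qt unfolding Q_def by simp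
  finally have eq: "T\<^sup>2 * Q v1 v2 = c\<^sup>2 * (A + C) * T" .
  have "(v1\<^sup>2 + v2\<^sup>2) * T = c\<^sup>2" using orth unfolding c_def T_def by algebra
  moreover have "v1\<^sup>2 + v2\<^sup>2 > 0" using vn by (auto simp: add_pos_nonneg add_nonneg_pos)
  ultimately have "c\<^sup>2 > 0" using T by (metis mult_pos_pos)
  then have "T\<^sup>2 * Q v1 v2 > 0" unfolding eq using T tr by simp
  then show ?thesis using T unfolding Q_def by (simp add: zero_less_mult_iff)
qed

lemma has_dps_expansion_laplacian_limit:
  assumes R: "has_dps_expansion \<psi> y a \<rho>" and y: "y islimpt \<Omega>"
    and lap: "\<And>p. p \<in> \<Omega> \<Longrightarrow> laplacian \<psi> p = F (\<psi> p)" and F: "isCont F (\<psi> y)"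
  shows "2 * (a (2,0) + a (0,2)) = F (\<psi> y)"
proof -
  have "isCont \<psi> y" using has_dps_expansion_has_derivative[OF R] has_derivative_continuous by blast
  then have "isCont (\<lambda>p. F (\<psi> p)) y" using F by (rule isCont_o2)
  then have "((\<lambda>p. F (\<psi> p)) \<longlongrightarrow> F (\<psi> y)) (at y within \<Omega>)"
    unfolding isCont_def by (rule tendsto_within_subset) simp
  then have "(laplacian \<psi> \<longlongrightarrow> F (\<psi> y)) (at y within \<Omega>)"
    by (rule Lim_transform_within[of _ _ _ _ 1]) (auto simp: lap)
  moreover have "(laplacian \<psi> \<longlongrightarrow> 2 * (a (2,0) + a (0,2))) (at y within \<Omega>)"
    using has_dps_expansion_laplacian_tendsto[OF R] by (rule tendsto_within_subset) simp
  moreover have "at y within \<Omega> \<noteq> bot" using y by (simp add: trivial_limit_within)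
  ultimately show ?thesis using tendsto_unique by blast
qed

section \<open>Geometry of a nearest boundary point\<close>

lemma ball_subset_if_frontier_far:
  fixes x :: "'a::real_normed_vector"
  assumes "x \<in> S" and far: "\<And>w. w \<in> frontier S \<Longrightarrow> d \<le> dist x w"
  shows "ball x d \<subseteq> S"
proof (rule ccontr)
  assume out: "\<not> ball x d \<subseteq> S"
  then obtain w where "w \<in> ball x d" by blast
  then have "x \<in> ball x d" by (auto intro: le_less_trans[OF zero_le_dist])
  then have "ball x d \<inter> frontier S \<noteq> {}"
    using connected_Int_frontier[OF connected_ball, of x d S] \<open>x \<in> S\<close> out by blast
  then show False using far by fastforce
qed

lemma dist_point_on_segment_less:
  fixes x y :: "'a::real_normed_vector"
  assumes "t \<in> {0<..<1}" and "x \<noteq> y"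
  shows "dist x (y + t *\<^sub>R (x - y)) < dist x y"
proof -
  have "x - (y + t *\<^sub>R (x - y)) = (1 - t) *\<^sub>R (x - y)" by (simp add: algebra_simps)
  then have "dist x (y + t *\<^sub>R (x - y)) = (1 - t) * dist x y" using assms by (simp add: dist_norm)
  also have "\<dots> < dist x y" using assms by (auto simp: mult_less_cancel_right2)
  finally show ?thesis .
qed

lemma nearest_point_orthogonal_tangent:
  fixes \<gamma> :: "real \<Rightarrow> real \<times> real"
  assumes \<gamma>: "(\<gamma> has_vector_derivative \<tau>) (at t0)" and near: "\<And>t. dist x (\<gamma> t0) \<le> dist x (\<gamma> t)"
  shows "(fst x - fst (\<gamma> t0)) * fst \<tau> + (snd x - snd (\<gamma> t0)) * snd \<tau> = 0"
proof -
  define f where "f = (\<lambda>t. (fst (\<gamma> t) - fst x)\<^sup>2 + (snd (\<gamma> t) - snd x)\<^sup>2)"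
  have df: "(f has_real_derivative
      2 * (fst (\<gamma> t0) - fst x) * fst \<tau> + 2 * (snd (\<gamma> t0) - snd x) * snd \<tau>) (at t0)"
    unfolding f_def using has_vector_derivative_fst_snd[OF \<gamma>]
    by (auto intro!: derivative_eq_intros simp: algebra_simps)
  have f_dist: "f t = (dist x (\<gamma> t))\<^sup>2" for t
  proof -
    have "(dist x (\<gamma> t))\<^sup>2 = (dist (fst x) (fst (\<gamma> t)))\<^sup>2 + (dist (snd x) (snd (\<gamma> t)))\<^sup>2"
      using dist_Pair_Pair[of "fst x" "snd x" "fst (\<gamma> t)" "snd (\<gamma> t)"] by simp
    then show ?thesis by (simp add: f_def dist_real_def power2_commute)
  qed
  have "f t0 \<le> f t" for t
    unfolding f_dist using near[of t] by (simp add: power_mono)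
  then have "2 * (fst (\<gamma> t0) - fst x) * fst \<tau> + 2 * (snd (\<gamma> t0) - snd x) * snd \<tau> = 0"
    by (intro DERIV_local_min[OF df, of 1]) auto
  then show ?thesis by (simp add: algebra_simps)
qed

lemma analytic_boundary_tangent:
  assumes "analytic_boundary \<Omega>" and "y \<in> frontier \<Omega>"
  obtains \<gamma> \<tau> t0 where "(\<gamma> has_vector_derivative \<tau>) (at t0)" "\<tau> \<noteq> 0" "\<gamma> t0 = y"
    "\<And>t. \<gamma> t \<in> frontier \<Omega>"
proof -
  obtain \<gamma> :: "real \<Rightarrow> real \<times> real" where per: "\<And>t. \<gamma> (t + 1) = \<gamma> t"
    and dif: "\<And>t. \<gamma> differentiable at t \<and> vector_derivative \<gamma> (at t) \<noteq> 0"
    and img: "\<gamma> ` {0..1} = frontier \<Omega>"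
    using assms(1) unfolding analytic_boundary_def by blast
  interpret periodic_fun_simple' \<gamma> by unfold_locales (rule per)
  have "\<gamma> t \<in> frontier \<Omega>" for t
  proof -
    have "\<gamma> t = \<gamma> (frac t + of_int \<lfloor>t\<rfloor>)" by (simp add: frac_def)
    also have "\<dots> = \<gamma> (frac t)" by (rule plus_of_int)
    finally have "\<gamma> t = \<gamma> (frac t)" .
    moreover have "frac t \<in> {0..1}" using frac_lt_1[of t] by simp
    ultimately show ?thesis using img by (metis imageI)
  qed
  moreover obtain t0 where "\<gamma> t0 = y" using assms(2) img by (metis imageE)
  ultimately show ?thesis using that dif vector_derivative_works by blast
qed

lemma quadratic_part_pos_toward_nearest_point:
  assumes "open \<Omega>" and x: "x \<in> \<Omega>" and bdy: "analytic_boundary \<Omega>"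
    and yF: "y \<in> frontier \<Omega>" and near: "\<And>w. w \<in> frontier \<Omega> \<Longrightarrow> dist x y \<le> dist x w"
    and R: "has_dps_expansion \<psi> y a \<rho>" and c: "a (0,0) = 0" "a (1,0) = 0" "a (0,1) = 0"
    and lap: "\<And>p. p \<in> \<Omega> \<Longrightarrow> laplacian \<psi> p = F (\<psi> p)" and "isCont F 0" and "F 0 = 1"
    and zero: "\<And>p. p \<in> frontier \<Omega> \<Longrightarrow> \<psi> p = 0"
  shows "dps_quadratic_part a (fst x - fst y) (snd x - snd y) > 0"
proof -
  obtain \<gamma> \<tau> t0 where \<gamma>: "(\<gamma> has_vector_derivative \<tau>) (at t0)" "\<tau> \<noteq> 0" "\<gamma> t0 = y"
    and \<gamma>F: "\<And>t. \<gamma> t \<in> frontier \<Omega>"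
    using analytic_boundary_tangent[OF bdy yF] by metis
  have tangent: "dps_quadratic_part a (fst \<tau>) (snd \<tau>) = 0"
    using has_dps_expansion_quadratic_part_tangent[OF R c \<gamma>(1,3)] zero \<gamma>F by blast
  have orth: "(fst x - fst y) * fst \<tau> + (snd x - snd y) * snd \<tau> = 0"
    using nearest_point_orthogonal_tangent[OF \<gamma>(1)] near \<gamma>F \<gamma>(3) by blast
  have y_notin: "y \<notin> \<Omega>" using yF \<open>open \<Omega>\<close> by (simp add: frontier_def interior_open)
  then have "y islimpt \<Omega>" using yF by (auto simp: frontier_def closure_def)
  from has_dps_expansion_laplacian_limit[OF R this lap]
  have trace: "a (2,0) + a (0,2) > 0" using zero[OF yF] assms(11,12) by simp
  have "x \<noteq> y" using x y_notin by auto
  then have "fst x - fst y \<noteq> 0 \<or> snd x - snd y \<noteq> 0" by (auto simp: prod_eq_iff)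
  moreover have "fst \<tau> \<noteq> 0 \<or> snd \<tau> \<noteq> 0" using \<gamma>(2) by (auto simp: prod_eq_iff)
  ultimately show ?thesis
    using quadratic_form_pos_on_orthogonal[OF orth trace tangent[unfolded dps_quadratic_part_def]]
    by (simp add: dps_quadratic_part_def)
qed

lemma exists_pos_near_boundary:
  assumes "open \<Omega>" and x: "x \<in> \<Omega>" and bdy: "analytic_boundary \<Omega>"
    and an: "\<And>p. p \<in> closure \<Omega> \<Longrightarrow> real_analytic_at2 \<psi> p"
    and lap: "\<And>p. p \<in> \<Omega> \<Longrightarrow> laplacian \<psi> p = F (\<psi> p)" and "isCont F 0" and "F 0 = 1"
    and frontier: "\<And>p. p \<in> frontier \<Omega> \<Longrightarrow> \<psi> p = 0 \<and> critical_point \<psi> p"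
  shows "\<exists>p\<in>\<Omega>. \<psi> p > 0"
proof -
  have "frontier \<Omega> \<noteq> {}" using bdy unfolding analytic_boundary_def by auto
  then obtain y where yF: "y \<in> frontier \<Omega>" and near: "\<And>w. w \<in> frontier \<Omega> \<Longrightarrow> dist x y \<le> dist x w"
    using distance_attains_inf[OF frontier_closed] by blast
  have "y \<in> closure \<Omega>" using yF by (simp add: frontier_def)
  then obtain a \<rho> where R: "has_dps_expansion \<psi> y a \<rho>"
    using real_analytic_at2_has_dps_expansion[OF an] by blast
  have c: "a (0,0) = 0" "a (1,0) = 0" "a (0,1) = 0"
    using frontier[OF yF] has_dps_expansion_center[OF R] has_dps_expansion_critical_point_iff[OF R]
    by auto
  have "\<forall>\<^sub>F t in at_right 0. \<psi> (fst y + t * (fst x - fst y), snd y + t * (snd x - snd y)) > 0"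
    using quadratic_part_pos_toward_nearest_point[OF assms(1) x bdy yF near R c lap assms(6,7)] frontier
    by (intro has_dps_expansion_eventually_pos[OF R c]) blast
  moreover have "\<forall>\<^sub>F t in at_right (0::real). t \<in> {0<..<1}" by (rule eventually_at_right_real) simp
  moreover have "(fst y + t * (fst x - fst y), snd y + t * (snd x - snd y)) = y + t *\<^sub>R (x - y)" for t
    by (simp add: prod_eq_iff)
  ultimately have "\<forall>\<^sub>F t in at_right 0. t \<in> {0<..<1} \<and> \<psi> (y + t *\<^sub>R (x - y)) > 0"
    by (auto elim: eventually_elim2)
  then obtain t where t: "t \<in> {0<..<1}" and pos: "\<psi> (y + t *\<^sub>R (x - y)) > 0"
    using eventually_happens'[OF trivial_limit_at_right_real] by blast
  have "x \<noteq> y" using x yF \<open>open \<Omega>\<close> by (auto simp: frontier_def interior_open)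
  then have "y + t *\<^sub>R (x - y) \<in> ball x (dist x y)"
    using dist_point_on_segment_less t by (auto simp: dist_commute)
  then show ?thesis using ball_subset_if_frontier_far[OF x near] pos by blast
qed

section \<open>Sign of \<open>\<psi>\<close> when its zeros are isolated\<close>

lemma zeros_sparse_if_critical:
  assumes "open \<Omega>" and cont: "continuous_on \<Omega> \<psi>"
    and crit: "\<And>q. q \<in> \<Omega> \<Longrightarrow> \<psi> q = 0 \<Longrightarrow> critical_point \<psi> q"
    and isol: "\<And>p. p \<in> \<Omega> \<Longrightarrow> critical_point \<psi> p \<Longrightarrow> \<not> p islimpt {q. critical_point \<psi> q}"
  shows "{p\<in>\<Omega>. \<psi> p = 0} sparse_in \<Omega>"
  unfolding sparse_in_open[OF \<open>open \<Omega>\<close>]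
proof
  fix p assume p: "p \<in> \<Omega>"
  show "\<not> p islimpt {p\<in>\<Omega>. \<psi> p = 0}"
  proof (cases "\<psi> p = 0")
    case True
    then show ?thesis using isol[OF p crit[OF p]] crit islimpt_subset[of p _ "{q. critical_point \<psi> q}"]
      by blast
  next
    case False
    have "(\<psi> \<longlongrightarrow> \<psi> p) (at p)"
      using cont p \<open>open \<Omega>\<close> by (simp add: continuous_on_eq_continuous_at isCont_def)
    then have "\<forall>\<^sub>F q in at p. \<psi> q \<noteq> 0" using False by (rule tendsto_imp_eventually_ne)
    then show ?thesis unfolding islimpt_iff_eventually by (auto elim: eventually_mono)
  qed
qed

lemma nonpos_if_zeros_sparse:
  fixes \<psi> :: "'a::euclidean_space \<Rightarrow> real"
  assumes "2 \<le> DIM('a)" "open \<Omega>" "connected \<Omega>" and cont: "continuous_on \<Omega> \<psi>"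
    and sparse: "{p\<in>\<Omega>. \<psi> p = 0} sparse_in \<Omega>" and x: "x \<in> \<Omega>" "\<psi> x < 0" and p: "p \<in> \<Omega>"
  shows "\<psi> p \<le> 0"
proof (rule ccontr)
  assume "\<not> \<psi> p \<le> 0"
  let ?U = "\<Omega> - {p\<in>\<Omega>. \<psi> p = 0}"
  have "connected ?U" by (rule sparse_imp_connected) (use assms in auto)
  moreover have "open (\<Omega> \<inter> \<psi> -` {0<..})" "open (\<Omega> \<inter> \<psi> -` {..<0})"
    using continuous_open_preimage[OF cont \<open>open \<Omega>\<close>] by auto
  ultimately have "\<Omega> \<inter> \<psi> -` {0<..} \<inter> ?U = {} \<or> \<Omega> \<inter> \<psi> -` {..<0} \<inter> ?U = {}"
    by (rule connectedD) auto
  then show False using x p \<open>\<not> \<psi> p \<le> 0\<close> by auto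
qed

theorem mainTheorem11:
  fixes \<Omega> :: "(real \<times> real) set" and \<psi> :: "real \<times> real \<Rightarrow> real" and F :: "real \<Rightarrow> real"
  assumes "open \<Omega>" and "connected \<Omega>" and "bounded \<Omega>" and "simply_connected \<Omega>"
    and "analytic_boundary \<Omega>"
    and "\<forall>p\<in>closure \<Omega>. real_analytic_at2 \<psi> p"
    and "\<forall>p\<in>\<Omega>. critical_point \<psi> p \<longrightarrow> \<not> (p islimpt {q. critical_point \<psi> q})"
    and "continuous_on UNIV F" and "F 0 = 1"
    and "\<forall>p\<in>\<Omega>. laplacian \<psi> p = F (\<psi> p)"
    and "\<forall>p\<in>frontier \<Omega>. \<psi> p = 0 \<and> critical_point \<psi> p"
    and "\<not> real_analytic_at1 F 0"
  shows "\<forall>p\<in>\<Omega>. \<psi> p \<ge> 0"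
proof (rule ccontr)
  assume "\<not> (\<forall>p\<in>\<Omega>. \<psi> p \<ge> 0)"
  then obtain x where x: "x \<in> \<Omega>" "\<psi> x < 0" by force
  have an: "\<And>p. p \<in> closure \<Omega> \<Longrightarrow> real_analytic_at2 \<psi> p" using assms(6) by blast
  have lap: "\<And>p. p \<in> \<Omega> \<Longrightarrow> laplacian \<psi> p = F (\<psi> p)" using assms(10) by blast
  have "real_analytic_at1 F 0"
  proof (cases "\<exists>q\<in>\<Omega>. \<psi> q = 0 \<and> \<not> critical_point \<psi> q")
    case True
    then obtain q where q: "q \<in> \<Omega>" "\<psi> q = 0" "\<not> critical_point \<psi> q" by blast
    then have "real_analytic_at2 \<psi> q" using an closure_subset by blast
    from real_analytic_at1_of_regular_zero[OF this q(2,3) assms(1) q(1) lap] show ?thesis .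
  next
    case False
    have cont: "continuous_on \<Omega> \<psi>"
      using an closure_subset real_analytic_at2_isCont by (blast intro: continuous_at_imp_continuous_on)
    have "{p\<in>\<Omega>. \<psi> p = 0} sparse_in \<Omega>"
      by (rule zeros_sparse_if_critical[OF assms(1) cont]) (use False assms(7) in blast)+
    then have "\<forall>p\<in>\<Omega>. \<psi> p \<le> 0"
      using nonpos_if_zeros_sparse[OF _ assms(1,2) cont _ x] by simp
    moreover have "\<exists>p\<in>\<Omega>. \<psi> p > 0"
      by (rule exists_pos_near_boundary[OF assms(1) x(1) assms(5) an lap _ assms(9)])
         (use assms(8,11) in \<open>auto simp: continuous_on_eq_continuous_at\<close>)
    ultimately show ?thesis by force
  qed
  with assms(12) show False by blast
qed

end
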